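(* Let $r,l,\tilde{l}>0$ and let $E\subset\mathbb{R}^5$ be the four-dimensional ellipsoid $$\frac{x_0^2}{r^2}+\frac{x_1^2+x_2^2}{l^2}+\frac{x_3^2+x_4^2}{\tilde{l}^2}=1$$ equipped with the metric $ds^2=\sum_{a=1}^4 e^a\otimes e^a$, where in coordinates $\rho\in[0,\pi]$, $\theta\in[0,\tfrac{\pi}{2}]$, $\varphi,\chi\in[0,2\pi]$, $$e^1=l\sin\rho\cos\theta\,d\varphi,\quad e^2=\tilde{l}\sin\rho\sin\theta\,d\chi,\quad e^3=f\sin\rho\,d\theta+h\,d\rho,\quad e^4=g\,d\rho,$$ with $f=\sqrt{l^2\sin^2\theta+\tilde{l}^2\cos^2\theta}$, $g=\sqrt{r^2\sin^2\rho+l^2\tilde{l}^2f^{-2}\cos^2\rho}$, $h=\frac{\tilde{l}^2-l^2}{f}\cos\rho\sin\theta\cos\theta$. (This is the metric induced on $E$ from the Euclidean metric of $\mathbb{R}^5$ via $x_0=r\cos\rho$, $(x_1,x_2)=l\sin\rho\cos\theta(\cos\varphi,\sin\varphi)$, $(x_3,x_4)=\tilde{l}\sin\rho\sin\theta(\cos\chi,\sin\chi)$.) Then this metric is Einstein, i.e. its Ricci tensor satisfies $R_{ab}=\lambda\delta_{ab}$ for some constant $\lambda\in\mathbb{R}$, if and only if $r=l=\tilde{l}$.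
   Context: A Riemannian metric is Einstein if its Ricci tensor is a constant multiple of the metric. For $r=l=\tilde{l}$ the metric above is the round four-sphere of radius $r$. *)

theory Defs
  imports "HOL-Analysis.Analysis"
begin

text \<open>Coordinates on the chart of the ellipsoid: a point of the chart is
  x :: real^4 with x$1 = rho, x$2 = theta, x$3 = varphi, x$4 = chi.
  Frame index a = 1..4 corresponds to e^1..e^4.\<close>

definition ell_f :: "real \<Rightarrow> real \<Rightarrow> real \<Rightarrow> real" where
  "ell_f l lt \<theta> = sqrt (l\<^sup>2 * (sin \<theta>)\<^sup>2 + lt\<^sup>2 * (cos \<theta>)\<^sup>2)"

definition ell_g :: "real \<Rightarrow> real \<Rightarrow> real \<Rightarrow> real \<Rightarrow> real \<Rightarrow> real" where
  "ell_g r l lt \<rho> \<theta> =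
     sqrt (r\<^sup>2 * (sin \<rho>)\<^sup>2 + l\<^sup>2 * lt\<^sup>2 / (ell_f l lt \<theta>)\<^sup>2 * (cos \<rho>)\<^sup>2)"

definition ell_h :: "real \<Rightarrow> real \<Rightarrow> real \<Rightarrow> real \<Rightarrow> real" where
  "ell_h l lt \<rho> \<theta> = (lt\<^sup>2 - l\<^sup>2) / ell_f l lt \<theta> * cos \<rho> * sin \<theta> * cos \<theta>"

text \<open>Coframe coefficients: row a, column i gives the coefficient of dx^i in e^a.\<close>
definition ell_frame :: "real \<Rightarrow> real \<Rightarrow> real \<Rightarrow> real^4 \<Rightarrow> real^4^4" where
  "ell_frame r l lt x = (let \<rho> = x$1; \<theta> = x$2 in
     vector [vector [0, 0, l * sin \<rho> * cos \<theta>, 0],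
             vector [0, 0, 0, lt * sin \<rho> * sin \<theta>],
             vector [ell_h l lt \<rho> \<theta>, ell_f l lt \<theta> * sin \<rho>, 0, 0],
             vector [ell_g r l lt \<rho> \<theta>, 0, 0, 0]])"

definition ell_metric :: "real \<Rightarrow> real \<Rightarrow> real \<Rightarrow> real^4 \<Rightarrow> real^4^4" where
  "ell_metric r l lt x = transpose (ell_frame r l lt x) ** ell_frame r l lt x"

text \<open>Chart domain (open, dense in the ellipsoid): 0 < rho < pi, 0 < theta < pi/2.\<close>
definition ell_chart :: "(real^4) set" where
  "ell_chart = {x. 0 < x$1 \<and> x$1 < pi \<and> 0 < x$2 \<and> x$2 < pi / 2}"

definition pd :: "4 \<Rightarrow> (real^4 \<Rightarrow> real) \<Rightarrow> real^4 \<Rightarrow> real" where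
  "pd k F x = deriv (\<lambda>t. F (x + t *\<^sub>R axis k 1)) 0"

definition christoffel :: "(real^4 \<Rightarrow> real^4^4) \<Rightarrow> 4 \<Rightarrow> 4 \<Rightarrow> 4 \<Rightarrow> real^4 \<Rightarrow> real" where
  "christoffel G k i j x = (1/2) * (\<Sum>m\<in>UNIV. matrix_inv (G x) $ k $ m *
      (pd i (\<lambda>y. G y $ m $ j) x + pd j (\<lambda>y. G y $ m $ i) x - pd m (\<lambda>y. G y $ i $ j) x))"

text \<open>Ricci tensor R_ij = R^k_{ikj} of a metric G, in coordinates.\<close>
definition ricci :: "(real^4 \<Rightarrow> real^4^4) \<Rightarrow> 4 \<Rightarrow> 4 \<Rightarrow> real^4 \<Rightarrow> real" where
  "ricci G i j x = (\<Sum>k\<in>UNIV.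
      pd k (christoffel G k i j) x - pd j (christoffel G k i k) x
      + (\<Sum>p\<in>UNIV. christoffel G k k p x * christoffel G p i j x
                   - christoffel G k j p x * christoffel G p i k x))"

text \<open>Einstein: Ric = lambda * g for a constant lambda on the chart
  (equivalently R_ab = lambda delta_ab in the orthonormal frame).\<close>
definition einstein_on :: "(real^4 \<Rightarrow> real^4^4) \<Rightarrow> (real^4) set \<Rightarrow> bool" where
  "einstein_on G U \<longleftrightarrow> (\<exists>c::real. \<forall>x\<in>U. \<forall>i j. ricci G i j x = c * G x $ i $ j)"

end

theory Submission
  imports Defs
begin

text \<open>In the coordinates (\<rho>, \<theta>, \<phi>, \<chi>) the metric depends only on \<rho> and \<theta> and is
  block diagonal: a 2x2 block in (\<rho>, \<theta>) and diagonal entries for \<phi> and \<chi>. Its Ricci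
  tensor is therefore an explicit rational expression in the inverse metric and the first and second
  partial derivatives of the metric, which are computed in closed form. For r = l = lt this gives
  Ric = (3 / r^2) g on the whole chart. Conversely, at the point \<rho> = \<pi>/2, \<theta> = \<pi>/4 the
  diagonal Ricci components along \<rho>, \<phi> and \<chi> yield three equations for the Einstein
  constant; the difference of the last two forces l = lt, and then the first one forces r = l.\<close>

section \<open>Christoffel symbols and Ricci tensor from derivative data\<close>

lemma matrix_inv_unique:
  fixes A B :: "'a::field^'n^'n"
  assumes "A ** B = mat 1"
  shows "matrix_inv A = B"
proof -
  have "B ** A = mat 1" using assms matrix_left_right_inverse by blast
  then have "\<exists>A'. A ** A' = mat 1 \<and> A' ** A = mat 1" using assms by blast
  then have inv: "A ** matrix_inv A = mat 1 \<and> matrix_inv A ** A = mat 1"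
    unfolding matrix_inv_def by (rule someI_ex)
  have "matrix_inv A = matrix_inv A ** (A ** B)"
    by (simp add: assms)
  also have "\<dots> = (matrix_inv A ** A) ** B"
    by (simp add: matrix_mul_assoc)
  also have "\<dots> = B" using inv by simp
  finally show ?thesis .
qed

lemma eventually_line_in_open:
  fixes x v :: "'a::real_normed_vector"
  assumes "open S" "x \<in> S"
  shows "\<forall>\<^sub>F t in nhds 0. x + t *\<^sub>R v \<in> S"
proof -
  have "open ((\<lambda>t::real. x + t *\<^sub>R v) -` S)"
    by (intro open_vimage assms continuous_intros)
  then have "\<forall>\<^sub>F t in nhds 0. t \<in> (\<lambda>t. x + t *\<^sub>R v) -` S"
    using assms(2) by (intro eventually_nhds_in_open) auto
  then show ?thesis by simp
qed

lemma has_real_derivative_matrix_inverse: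
  fixes A B :: "real \<Rightarrow> real^'n^'n"
  assumes inv: "\<forall>\<^sub>F t in nhds t0. A t ** B t = mat 1"
    and dA: "\<And>i j. ((\<lambda>t. A t $ i $ j) has_real_derivative A' $ i $ j) (at t0)"
    and dB: "\<And>i j. (\<lambda>t. B t $ i $ j) differentiable (at t0)"
  shows "((\<lambda>t. B t $ i $ j) has_real_derivative (- (B t0 ** A' ** B t0)) $ i $ j) (at t0)"
proof -
  define B' where "B' = (\<chi> i j. deriv (\<lambda>t. B t $ i $ j) t0)"
  have dB': "((\<lambda>t. B t $ i $ j) has_real_derivative B' $ i $ j) (at t0)" for i j
    using dB[of i j] by (simp add: B'_def DERIV_deriv_iff_real_differentiable)
  have product_rule: "A t0 ** B' = - (A' ** B t0)"
  proof -
    have "(A' ** B t0 + A t0 ** B') $ i $ k = 0" for i k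
    proof -
      have "((\<lambda>t. (A t ** B t) $ i $ k) has_real_derivative (A' ** B t0 + A t0 ** B') $ i $ k) (at t0)"
        unfolding matrix_matrix_mult_def vector_add_component vec_lambda_beta
        by (auto intro!: derivative_eq_intros dA dB' simp: sum.distrib algebra_simps)
      moreover have "((\<lambda>t. (A t ** B t) $ i $ k) has_real_derivative 0) (at t0)"
        using inv
        by (intro DERIV_cong_ev[THEN iffD1, OF refl _ refl DERIV_const]) (auto elim: eventually_mono)
      ultimately show ?thesis by (rule DERIV_unique)
    qed
    then show ?thesis by (simp add: vec_eq_iff eq_neg_iff_add_eq_0 add.commute)
  qed
  have BA: "B t0 ** A t0 = mat 1"
    using eventually_nhds_x_imp_x[OF inv] matrix_left_right_inverse by blast
  have "B' = B t0 ** (A t0 ** B')"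
    by (simp add: matrix_mul_assoc BA)
  also have "\<dots> = B t0 ** (- (A' ** B t0))"
    by (simp add: product_rule)
  also have "\<dots> = - (B t0 ** (A' ** B t0))"
    by (simp add: vec_eq_iff matrix_matrix_mult_def sum_negf)
  also have "\<dots> = - (B t0 ** A' ** B t0)"
    by (simp add: matrix_mul_assoc)
  finally show ?thesis using dB' by simp
qed

text \<open>N stands for the inverse metric, D k for the partial derivative of G along coordinate k and
  D2 l k for the derivative of D k along coordinate l, all at one point. The factor
  - N ** D l ** N in christoffel_deriv_expr is the derivative of the inverse metric.\<close>

definition christoffel_expr :: "real^'n^'n \<Rightarrow> ('n \<Rightarrow> real^'n^'n) \<Rightarrow> 'n \<Rightarrow> 'n \<Rightarrow> 'n \<Rightarrow> real" where
  "christoffel_expr N D k i j =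
     (1/2) * (\<Sum>m\<in>UNIV. N $ k $ m * (D i $ m $ j + D j $ m $ i - D m $ i $ j))"

definition christoffel_deriv_expr ::
    "real^'n^'n \<Rightarrow> ('n \<Rightarrow> real^'n^'n) \<Rightarrow> ('n \<Rightarrow> 'n \<Rightarrow> real^'n^'n) \<Rightarrow> 'n \<Rightarrow> 'n \<Rightarrow> 'n \<Rightarrow> 'n \<Rightarrow> real" where
  "christoffel_deriv_expr N D D2 l k i j =
     (1/2) * (\<Sum>m\<in>UNIV. - (N ** D l ** N) $ k $ m * (D i $ m $ j + D j $ m $ i - D m $ i $ j)
       + N $ k $ m * (D2 l i $ m $ j + D2 l j $ m $ i - D2 l m $ i $ j))"

definition ricci_expr ::
    "real^'n^'n \<Rightarrow> ('n \<Rightarrow> real^'n^'n) \<Rightarrow> ('n \<Rightarrow> 'n \<Rightarrow> real^'n^'n) \<Rightarrow> 'n \<Rightarrow> 'n \<Rightarrow> real" where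
  "ricci_expr N D D2 i j = (\<Sum>k\<in>UNIV.
      christoffel_deriv_expr N D D2 k k i j - christoffel_deriv_expr N D D2 j k i k
      + (\<Sum>p\<in>UNIV. christoffel_expr N D k k p * christoffel_expr N D p i j
                   - christoffel_expr N D k j p * christoffel_expr N D p i k))"

lemma christoffel_eq_christoffel_expr:
  assumes dG: "\<And>k i j. ((\<lambda>t. G (y + t *\<^sub>R axis k 1) $ i $ j) has_real_derivative DG k $ i $ j) (at 0)"
    and inv: "G y ** N = mat 1"
  shows "christoffel G k i j y = christoffel_expr N DG k i j"
proof -
  have "pd a (\<lambda>y. G y $ b $ c) y = DG a $ b $ c" for a b c
    unfolding pd_def using dG by (rule DERIV_imp_deriv)
  then show ?thesis
    unfolding christoffel_def christoffel_expr_def matrix_inv_unique[OF inv] by simp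
qed

lemma pd_christoffel_eq_christoffel_deriv_expr:
  fixes G N :: "real^4 \<Rightarrow> real^4^4" and DG :: "4 \<Rightarrow> real^4 \<Rightarrow> real^4^4"
  assumes S: "open S" "x \<in> S"
    and dG: "\<And>y k i j. y \<in> S \<Longrightarrow>
      ((\<lambda>t. G (y + t *\<^sub>R axis k 1) $ i $ j) has_real_derivative DG k y $ i $ j) (at 0)"
    and d2G: "\<And>k i j.
      ((\<lambda>t. DG k (x + t *\<^sub>R axis l 1) $ i $ j) has_real_derivative D2G l k $ i $ j) (at 0)"
    and inv: "\<And>y. y \<in> S \<Longrightarrow> G y ** N y = mat 1"
    and dN: "\<And>a b. (\<lambda>t. N (x + t *\<^sub>R axis l 1) $ a $ b) differentiable (at 0)"
  shows "pd l (christoffel G k i j) x =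
    christoffel_deriv_expr (N x) (\<lambda>k. DG k x) D2G l k i j"
proof -
  let ?y = "\<lambda>t::real. x + t *\<^sub>R axis l 1"
  have near: "\<forall>\<^sub>F t in nhds 0. ?y t \<in> S"
    using S by (rule eventually_line_in_open)
  have dNl: "((\<lambda>t. N (?y t) $ a $ b) has_real_derivative (- (N x ** DG l x ** N x)) $ a $ b) (at 0)"
    for a b
    using has_real_derivative_matrix_inverse[where A = "\<lambda>t. G (?y t)", OF _ dG[OF S(2)] dN]
      near by (simp add: inv eventually_mono)
  have "\<forall>\<^sub>F t in nhds 0.
      christoffel G k i j (?y t) = christoffel_expr (N (?y t)) (\<lambda>k. DG k (?y t)) k i j"
    using near by eventually_elim (rule christoffel_eq_christoffel_expr[OF dG inv])
  then have "pd l (christoffel G k i j) x =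
      deriv (\<lambda>t. christoffel_expr (N (?y t)) (\<lambda>k. DG k (?y t)) k i j) 0"
    unfolding pd_def by (rule deriv_cong_ev[OF _ refl])
  also have "\<dots> = christoffel_deriv_expr (N x) (\<lambda>k. DG k x) D2G l k i j"
    unfolding christoffel_expr_def christoffel_deriv_expr_def
    by (rule DERIV_imp_deriv) (auto intro!: derivative_eq_intros dNl d2G simp: algebra_simps)
  finally show ?thesis .
qed

lemma ricci_eq_ricci_expr:
  fixes G N :: "real^4 \<Rightarrow> real^4^4" and DG :: "4 \<Rightarrow> real^4 \<Rightarrow> real^4^4"
  assumes S: "open S" "x \<in> S"
    and dG: "\<And>y k i j. y \<in> S \<Longrightarrow>
      ((\<lambda>t. G (y + t *\<^sub>R axis k 1) $ i $ j) has_real_derivative DG k y $ i $ j) (at 0)"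
    and d2G: "\<And>l k i j.
      ((\<lambda>t. DG k (x + t *\<^sub>R axis l 1) $ i $ j) has_real_derivative D2G l k $ i $ j) (at 0)"
    and inv: "\<And>y. y \<in> S \<Longrightarrow> G y ** N y = mat 1"
    and dN: "\<And>l a b. (\<lambda>t. N (x + t *\<^sub>R axis l 1) $ a $ b) differentiable (at 0)"
  shows "ricci G i j x = ricci_expr (N x) (\<lambda>k. DG k x) D2G i j"
proof -
  have "pd l (christoffel G k a b) x = christoffel_deriv_expr (N x) (\<lambda>k. DG k x) D2G l k a b"
    for l k a b
    using S dG d2G inv dN by (rule pd_christoffel_eq_christoffel_deriv_expr)
  moreover have "christoffel G k a b x = christoffel_expr (N x) (\<lambda>k. DG k x) k a b" for k a b
    using dG[OF S(2)] inv[OF S(2)] by (rule christoffel_eq_christoffel_expr)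
  ultimately show ?thesis
    by (simp add: ricci_def ricci_expr_def)
qed

section \<open>Block diagonal matrices\<close>

lemma vector_4 [simp]:
  "(vector [x, y, z, w] :: 'a::zero^4) $ 1 = x"
  "(vector [x, y, z, w] :: 'a::zero^4) $ 2 = y"
  "(vector [x, y, z, w] :: 'a::zero^4) $ 3 = z"
  "(vector [x, y, z, w] :: 'a::zero^4) $ 4 = w"
  unfolding vector_def by simp_all

definition block_mat :: "'a::zero \<Rightarrow> 'a \<Rightarrow> 'a \<Rightarrow> 'a \<Rightarrow> 'a \<Rightarrow> 'a^4^4" where
  "block_mat a b c p q =
     vector [vector [a, b, 0, 0], vector [b, c, 0, 0], vector [0, 0, p, 0], vector [0, 0, 0, q]]"

lemma block_mat_nth [simp]:
  "block_mat a b c p q $ 1 $ 1 = a" "block_mat a b c p q $ 1 $ 2 = b"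
  "block_mat a b c p q $ 1 $ 3 = 0" "block_mat a b c p q $ 1 $ 4 = 0"
  "block_mat a b c p q $ 2 $ 1 = b" "block_mat a b c p q $ 2 $ 2 = c"
  "block_mat a b c p q $ 2 $ 3 = 0" "block_mat a b c p q $ 2 $ 4 = 0"
  "block_mat a b c p q $ 3 $ 1 = 0" "block_mat a b c p q $ 3 $ 2 = 0"
  "block_mat a b c p q $ 3 $ 3 = p" "block_mat a b c p q $ 3 $ 4 = 0"
  "block_mat a b c p q $ 4 $ 1 = 0" "block_mat a b c p q $ 4 $ 2 = 0"
  "block_mat a b c p q $ 4 $ 3 = 0" "block_mat a b c p q $ 4 $ 4 = q"
  by (simp_all add: block_mat_def)

lemma block_mat_eq_iff:
  "block_mat a b c p q = block_mat a' b' c' p' q' \<longleftrightarrow> a = a' \<and> b = b' \<and> c = c' \<and> p = p' \<and> q = q'"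
  by (metis block_mat_nth(1,5,6,11,16))

lemma block_mat_zero [simp]: "block_mat 0 0 0 0 0 = 0"
  by (simp add: vec_eq_iff forall_4)

lemma has_real_derivative_block_mat:
  assumes "(a has_real_derivative a') F" "(b has_real_derivative b') F"
    "(c has_real_derivative c') F" "(p has_real_derivative p') F" "(q has_real_derivative q') F"
  shows "((\<lambda>t. block_mat (a t) (b t) (c t) (p t) (q t) $ i $ j) has_real_derivative
    block_mat a' b' c' p' q' $ i $ j) F"
  using exhaust_4[of i] exhaust_4[of j] assms by auto

definition block_det :: "'a::ring^4^4 \<Rightarrow> 'a" where
  "block_det M = M$1$1 * M$2$2 - M$1$2 * M$2$1"

definition block_inv :: "'a::field^4^4 \<Rightarrow> 'a^4^4" where
  "block_inv M = block_mat (M$2$2 / block_det M) (- M$1$2 / block_det M) (M$1$1 / block_det M)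
     (1 / M$3$3) (1 / M$4$4)"

lemma block_det_block_mat [simp]: "block_det (block_mat a b c p q) = a * c - b * b"
  by (simp add: block_det_def)

lemma block_mat_mult_block_inv:
  fixes a b c p q :: "'a::field"
  assumes "block_det (block_mat a b c p q) \<noteq> 0" "p \<noteq> 0" "q \<noteq> 0"
  shows "block_mat a b c p q ** block_inv (block_mat a b c p q) = mat 1"
proof -
  define d where "d = a * c - b * b"
  have "d \<noteq> 0" using assms(1) by (simp add: d_def)
  then have "a * (c / d) + b * (- b / d) = 1" "a * (- b / d) + b * (a / d) = 0"
    "b * (c / d) + c * (- b / d) = 0" "b * (- b / d) + c * (a / d) = 1"
    by (simp_all add: field_simps) (simp_all add: d_def)
  then show ?thesis
    using assms(2,3)
    by (simp add: block_inv_def d_def[symmetric] vec_eq_iff forall_4 matrix_matrix_mult_def sum_4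
        mat_def)
qed

lemma block_inv_block_mat_diag:
  fixes a c p q :: "'a::field"
  assumes "a \<noteq> 0" "c \<noteq> 0"
  shows "block_inv (block_mat a 0 c p q) = block_mat (1 / a) 0 (1 / c) (1 / p) (1 / q)"
  using assms by (simp add: block_inv_def block_mat_eq_iff)

lemma differentiable_block_inv:
  fixes M :: "real \<Rightarrow> real^4^4"
  assumes "\<And>i j. (\<lambda>t. M t $ i $ j) differentiable (at t0)"
    and "block_det (M t0) \<noteq> 0"
    and "M t0 $ 3 $ 3 \<noteq> 0" "M t0 $ 4 $ 4 \<noteq> 0"
  shows "(\<lambda>t. block_inv (M t) $ i $ j) differentiable (at t0)"
  using exhaust_4[of i] exhaust_4[of j] assms
  by (auto simp: block_inv_def block_det_def intro!: derivative_intros)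

section \<open>The ellipsoid metric in coordinates\<close>

definition ell_met :: "real \<Rightarrow> real \<Rightarrow> real \<Rightarrow> real \<Rightarrow> real \<Rightarrow> real^4^4" where
  "ell_met R L T p q = block_mat
     (R * sin p ^ 2 + cos p ^ 2 * (L * cos q ^ 2 + T * sin q ^ 2))
     ((T - L) * sin p * cos p * sin q * cos q)
     (sin p ^ 2 * (L * sin q ^ 2 + T * cos q ^ 2))
     (L * sin p ^ 2 * cos q ^ 2)
     (T * sin p ^ 2 * sin q ^ 2)"

lemma ell_f_pos:
  assumes "l > 0" "lt > 0"
  shows "ell_f l lt \<theta> > 0"
proof -
  have "0 < l\<^sup>2 * sin \<theta> ^ 2 + lt\<^sup>2 * cos \<theta> ^ 2"
  proof (cases "sin \<theta> = 0")
    case True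
    then have "cos \<theta> ^ 2 = 1" using sin_cos_squared_add[of \<theta>] by simp
    then show ?thesis using assms True by simp
  next
    case False
    then show ?thesis using assms by (intro add_pos_nonneg) auto
  qed
  then show ?thesis by (simp add: ell_f_def)
qed

lemma ell_metric_eq_ell_met:
  assumes "l > 0" "lt > 0"
  shows "ell_metric r l lt y = ell_met (r\<^sup>2) (l\<^sup>2) (lt\<^sup>2) (y$1) (y$2)"
proof -
  define p q where "p = y$1" and "q = y$2"
  define f h g where "f = ell_f l lt q" and "h = ell_h l lt p q" and "g = ell_g r l lt p q"
  have f2: "f\<^sup>2 = l\<^sup>2 * sin q ^ 2 + lt\<^sup>2 * cos q ^ 2"
    by (simp add: f_def ell_f_def)
  have "f > 0"
    unfolding f_def using assms by (rule ell_f_pos)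
  have frame: "ell_metric r l lt y = block_mat (h\<^sup>2 + g\<^sup>2) (h * (f * sin p)) ((f * sin p)\<^sup>2)
      ((l * sin p * cos q)\<^sup>2) ((lt * sin p * sin q)\<^sup>2)"
    unfolding ell_metric_def ell_frame_def Let_def p_def[symmetric] q_def[symmetric]
      f_def[symmetric] h_def[symmetric] g_def[symmetric]
    by (simp add: vec_eq_iff forall_4 matrix_matrix_mult_def transpose_def sum_4 power2_eq_square)
  have "h\<^sup>2 + g\<^sup>2 = r\<^sup>2 * sin p ^ 2
      + cos p ^ 2 * (((lt\<^sup>2 - l\<^sup>2)\<^sup>2 * sin q ^ 2 * cos q ^ 2 + l\<^sup>2 * lt\<^sup>2) / f\<^sup>2)"
    using \<open>f > 0\<close>
    by (simp add: h_def g_def ell_h_def ell_g_def f_def[symmetric] field_simps) algebra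
  also have "(lt\<^sup>2 - l\<^sup>2)\<^sup>2 * sin q ^ 2 * cos q ^ 2 + l\<^sup>2 * lt\<^sup>2 =
      f\<^sup>2 * (l\<^sup>2 * cos q ^ 2 + lt\<^sup>2 * sin q ^ 2)"
    unfolding f2 cos_squared_eq by (simp add: algebra_simps power2_eq_square)
  finally have "h\<^sup>2 + g\<^sup>2 = r\<^sup>2 * sin p ^ 2 + cos p ^ 2 * (l\<^sup>2 * cos q ^ 2 + lt\<^sup>2 * sin q ^ 2)"
    using \<open>f > 0\<close> by simp
  moreover have "h * (f * sin p) = (lt\<^sup>2 - l\<^sup>2) * sin p * cos p * sin q * cos q"
    using \<open>f > 0\<close> by (simp add: h_def ell_h_def f_def[symmetric])
  ultimately show ?thesis
    unfolding frame ell_met_def block_mat_eq_iff p_def[symmetric] q_def[symmetric]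
    by (simp add: f2 algebra_simps)
qed

text \<open>Suffixes r and t denote partial derivatives in \<rho> and \<theta>.\<close>

definition ell_met_dr :: "real \<Rightarrow> real \<Rightarrow> real \<Rightarrow> real \<Rightarrow> real \<Rightarrow> real^4^4" where
  "ell_met_dr R L T p q = block_mat
     (2 * sin p * cos p * (R - L * cos q ^ 2 - T * sin q ^ 2))
     ((T - L) * (cos p ^ 2 - sin p ^ 2) * sin q * cos q)
     (2 * sin p * cos p * (L * sin q ^ 2 + T * cos q ^ 2))
     (2 * L * sin p * cos p * cos q ^ 2)
     (2 * T * sin p * cos p * sin q ^ 2)"

definition ell_met_dt :: "real \<Rightarrow> real \<Rightarrow> real \<Rightarrow> real \<Rightarrow> real \<Rightarrow> real^4^4" where
  "ell_met_dt R L T p q = block_mat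
     (2 * cos p ^ 2 * sin q * cos q * (T - L))
     ((T - L) * sin p * cos p * (cos q ^ 2 - sin q ^ 2))
     (2 * sin p ^ 2 * sin q * cos q * (L - T))
     (- 2 * L * sin p ^ 2 * cos q * sin q)
     (2 * T * sin p ^ 2 * sin q * cos q)"

definition ell_met_drr :: "real \<Rightarrow> real \<Rightarrow> real \<Rightarrow> real \<Rightarrow> real \<Rightarrow> real^4^4" where
  "ell_met_drr R L T p q = block_mat
     (2 * (cos p ^ 2 - sin p ^ 2) * (R - L * cos q ^ 2 - T * sin q ^ 2))
     (- 4 * (T - L) * sin p * cos p * sin q * cos q)
     (2 * (cos p ^ 2 - sin p ^ 2) * (L * sin q ^ 2 + T * cos q ^ 2))
     (2 * L * (cos p ^ 2 - sin p ^ 2) * cos q ^ 2)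
     (2 * T * (cos p ^ 2 - sin p ^ 2) * sin q ^ 2)"

definition ell_met_drt :: "real \<Rightarrow> real \<Rightarrow> real \<Rightarrow> real \<Rightarrow> real \<Rightarrow> real^4^4" where
  "ell_met_drt R L T p q = block_mat
     (4 * sin p * cos p * sin q * cos q * (L - T))
     ((T - L) * (cos p ^ 2 - sin p ^ 2) * (cos q ^ 2 - sin q ^ 2))
     (4 * sin p * cos p * sin q * cos q * (L - T))
     (- 4 * L * sin p * cos p * cos q * sin q)
     (4 * T * sin p * cos p * sin q * cos q)"

definition ell_met_dtt :: "real \<Rightarrow> real \<Rightarrow> real \<Rightarrow> real \<Rightarrow> real \<Rightarrow> real^4^4" where
  "ell_met_dtt R L T p q = block_mat
     (2 * cos p ^ 2 * (T - L) * (cos q ^ 2 - sin q ^ 2))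
     (- 4 * (T - L) * sin p * cos p * sin q * cos q)
     (2 * sin p ^ 2 * (L - T) * (cos q ^ 2 - sin q ^ 2))
     (- 2 * L * sin p ^ 2 * (cos q ^ 2 - sin q ^ 2))
     (2 * T * sin p ^ 2 * (cos q ^ 2 - sin q ^ 2))"

lemma has_real_derivative_ell_met_r:
  "((\<lambda>t. ell_met R L T (p + t) q $ i $ j) has_real_derivative ell_met_dr R L T p q $ i $ j) (at 0)"
  unfolding ell_met_def ell_met_dr_def
  by (rule has_real_derivative_block_mat;
      auto intro!: derivative_eq_intros simp: power2_eq_square algebra_simps)

lemma has_real_derivative_ell_met_t:
  "((\<lambda>t. ell_met R L T p (q + t) $ i $ j) has_real_derivative ell_met_dt R L T p q $ i $ j) (at 0)"
  unfolding ell_met_def ell_met_dt_def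
  by (rule has_real_derivative_block_mat;
      auto intro!: derivative_eq_intros simp: power2_eq_square algebra_simps)

lemma has_real_derivative_ell_met_dr_r:
  "((\<lambda>t. ell_met_dr R L T (p + t) q $ i $ j) has_real_derivative ell_met_drr R L T p q $ i $ j) (at 0)"
  unfolding ell_met_dr_def ell_met_drr_def
  by (rule has_real_derivative_block_mat;
      auto intro!: derivative_eq_intros simp: power2_eq_square algebra_simps)

lemma has_real_derivative_ell_met_dr_t:
  "((\<lambda>t. ell_met_dr R L T p (q + t) $ i $ j) has_real_derivative ell_met_drt R L T p q $ i $ j) (at 0)"
  unfolding ell_met_dr_def ell_met_drt_def
  by (rule has_real_derivative_block_mat;
      auto intro!: derivative_eq_intros simp: power2_eq_square algebra_simps)

lemma has_real_derivative_ell_met_dt_r: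
  "((\<lambda>t. ell_met_dt R L T (p + t) q $ i $ j) has_real_derivative ell_met_drt R L T p q $ i $ j) (at 0)"
  unfolding ell_met_dt_def ell_met_drt_def
  by (rule has_real_derivative_block_mat;
      auto intro!: derivative_eq_intros simp: power2_eq_square algebra_simps)

lemma has_real_derivative_ell_met_dt_t:
  "((\<lambda>t. ell_met_dt R L T p (q + t) $ i $ j) has_real_derivative ell_met_dtt R L T p q $ i $ j) (at 0)"
  unfolding ell_met_dt_def ell_met_dtt_def
  by (rule has_real_derivative_block_mat;
      auto intro!: derivative_eq_intros simp: power2_eq_square algebra_simps)

text \<open>The metric depends only on \<rho> and \<theta>, so derivatives along \<phi> and \<chi> vanish.\<close>

definition ell_met_pd :: "real \<Rightarrow> real \<Rightarrow> real \<Rightarrow> 4 \<Rightarrow> real \<Rightarrow> real \<Rightarrow> real^4^4" where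
  "ell_met_pd R L T k p q =
     (if k = 1 then ell_met_dr R L T p q else if k = 2 then ell_met_dt R L T p q else 0)"

definition ell_met_pd2 :: "real \<Rightarrow> real \<Rightarrow> real \<Rightarrow> 4 \<Rightarrow> 4 \<Rightarrow> real \<Rightarrow> real \<Rightarrow> real^4^4" where
  "ell_met_pd2 R L T l k p q =
     (if k = 1 \<and> l = 1 then ell_met_drr R L T p q
      else if k = 2 \<and> l = 2 then ell_met_dtt R L T p q
      else if (k = 1 \<and> l = 2) \<or> (k = 2 \<and> l = 1) then ell_met_drt R L T p q
      else 0)"

lemma has_real_derivative_ell_met_axis:
  "((\<lambda>t. ell_met R L T ((y + t *\<^sub>R axis k 1) $ 1) ((y + t *\<^sub>R axis k 1) $ 2) $ i $ j)
     has_real_derivative ell_met_pd R L T k (y$1) (y$2) $ i $ j) (at 0)"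
  using exhaust_4[of k]
  by (auto simp: axis_def ell_met_pd_def has_real_derivative_ell_met_r has_real_derivative_ell_met_t)

lemma has_real_derivative_ell_met_pd_axis:
  "((\<lambda>t. ell_met_pd R L T k ((y + t *\<^sub>R axis l 1) $ 1) ((y + t *\<^sub>R axis l 1) $ 2) $ i $ j)
     has_real_derivative ell_met_pd2 R L T l k (y$1) (y$2) $ i $ j) (at 0)"
  using exhaust_4[of k] exhaust_4[of l]
  by (auto simp: axis_def ell_met_pd_def ell_met_pd2_def
      has_real_derivative_ell_met_dr_r has_real_derivative_ell_met_dr_t
      has_real_derivative_ell_met_dt_r has_real_derivative_ell_met_dt_t)

lemma ell_chart_trig_pos:
  assumes "x \<in> ell_chart"
  shows "sin (x$1) > 0" "sin (x$2) > 0" "cos (x$2) > 0"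
  using assms by (auto simp: ell_chart_def intro: sin_gt_zero cos_gt_zero)

lemma open_ell_chart: "open ell_chart"
  unfolding ell_chart_def Collect_conj_eq
  by (intro open_Int open_halfspace_component_lt_cart open_halfspace_component_gt_cart)

lemma block_det_ell_met:
  "block_det (ell_met R L T p q) =
     sin p ^ 2 * (R * sin p ^ 2 * (L * sin q ^ 2 + T * cos q ^ 2) + L * T * cos p ^ 2)"
  unfolding ell_met_def block_det_block_mat
  using sin_cos_squared_add[of q] sin_cos_squared_add[of p] by algebra

lemma ell_met_nondegenerate:
  assumes "R > 0" "L > 0" "T > 0" "x \<in> ell_chart"
  shows "block_det (ell_met R L T (x$1) (x$2)) \<noteq> 0"
    "ell_met R L T (x$1) (x$2) $ 3 $ 3 \<noteq> 0" "ell_met R L T (x$1) (x$2) $ 4 $ 4 \<noteq> 0"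
proof -
  note trig = ell_chart_trig_pos[OF assms(4)]
  have "block_det (ell_met R L T (x$1) (x$2)) > 0"
    unfolding block_det_ell_met using assms trig
    by (intro mult_pos_pos add_pos_nonneg) auto
  then show "block_det (ell_met R L T (x$1) (x$2)) \<noteq> 0" by simp
  show "ell_met R L T (x$1) (x$2) $ 3 $ 3 \<noteq> 0" "ell_met R L T (x$1) (x$2) $ 4 $ 4 \<noteq> 0"
    using assms trig by (simp_all add: ell_met_def)
qed

lemma ricci_ell_metric_eq_ricci_expr:
  assumes "r > 0" "l > 0" "lt > 0" "x \<in> ell_chart"
  shows "ricci (ell_metric r l lt) i j x =
    ricci_expr (block_inv (ell_met (r\<^sup>2) (l\<^sup>2) (lt\<^sup>2) (x$1) (x$2)))
      (\<lambda>k. ell_met_pd (r\<^sup>2) (l\<^sup>2) (lt\<^sup>2) k (x$1) (x$2))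
      (\<lambda>l' k. ell_met_pd2 (r\<^sup>2) (l\<^sup>2) (lt\<^sup>2) l' k (x$1) (x$2)) i j"
proof -
  let ?G = "ell_metric r l lt"
  have G: "?G y = ell_met (r\<^sup>2) (l\<^sup>2) (lt\<^sup>2) (y$1) (y$2)" for y
    using assms(2,3) by (rule ell_metric_eq_ell_met)
  have nondeg: "block_det (?G y) \<noteq> 0" "?G y $ 3 $ 3 \<noteq> 0" "?G y $ 4 $ 4 \<noteq> 0"
    if "y \<in> ell_chart" for y
    unfolding G using ell_met_nondegenerate[OF _ _ _ that] assms by simp_all
  have dG: "((\<lambda>t. ?G (y + t *\<^sub>R axis k 1) $ i $ j) has_real_derivative
      ell_met_pd (r\<^sup>2) (l\<^sup>2) (lt\<^sup>2) k (y$1) (y$2) $ i $ j) (at 0)" for y k i j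
    unfolding G by (rule has_real_derivative_ell_met_axis)
  have "ricci ?G i j x = ricci_expr (block_inv (?G x))
      (\<lambda>k. ell_met_pd (r\<^sup>2) (l\<^sup>2) (lt\<^sup>2) k (x$1) (x$2))
      (\<lambda>l' k. ell_met_pd2 (r\<^sup>2) (l\<^sup>2) (lt\<^sup>2) l' k (x$1) (x$2)) i j"
  proof (rule ricci_eq_ricci_expr[where S = ell_chart])
    show "open ell_chart" "x \<in> ell_chart"
      using open_ell_chart assms(4) .
    show "?G y ** block_inv (?G y) = mat 1" if "y \<in> ell_chart" for y
      using nondeg[OF that] unfolding G ell_met_def by (intro block_mat_mult_block_inv) simp_all
    show "(\<lambda>t. block_inv (?G (x + t *\<^sub>R axis l' 1)) $ a $ b) differentiable (at 0)" for l' a b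
      using nondeg[OF assms(4)]
      by (intro differentiable_block_inv) (auto simp: real_differentiable_def intro: dG)
  qed (use dG has_real_derivative_ell_met_pd_axis in auto)
  then show ?thesis by (simp add: G)
qed

section \<open>The round sphere\<close>

text \<open>Here s, c, S, K stand for sin \<rho>, cos \<rho>, sin \<theta>, cos \<theta>; abstracting them keeps the
  symbolic computation polynomial.\<close>

definition round_met :: "real \<Rightarrow> real \<Rightarrow> real \<Rightarrow> real \<Rightarrow> real^4^4" where
  "round_met R s S K = block_mat R 0 (R * s\<^sup>2) (R * s\<^sup>2 * K\<^sup>2) (R * s\<^sup>2 * S\<^sup>2)"

definition round_met_pd :: "real \<Rightarrow> real \<Rightarrow> real \<Rightarrow> real \<Rightarrow> real \<Rightarrow> 4 \<Rightarrow> real^4^4" where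
  "round_met_pd R s c S K k =
     (if k = 1 then block_mat 0 0 (2 * R * s * c) (2 * R * s * c * K\<^sup>2) (2 * R * s * c * S\<^sup>2)
      else if k = 2 then block_mat 0 0 0 (- 2 * R * s\<^sup>2 * K * S) (2 * R * s\<^sup>2 * S * K)
      else 0)"

definition round_met_pd2 :: "real \<Rightarrow> real \<Rightarrow> real \<Rightarrow> real \<Rightarrow> real \<Rightarrow> 4 \<Rightarrow> 4 \<Rightarrow> real^4^4" where
  "round_met_pd2 R s c S K l k =
     (if k = 1 \<and> l = 1 then
        block_mat 0 0 (2 * R * (c\<^sup>2 - s\<^sup>2)) (2 * R * (c\<^sup>2 - s\<^sup>2) * K\<^sup>2) (2 * R * (c\<^sup>2 - s\<^sup>2) * S\<^sup>2)
      else if k = 2 \<and> l = 2 then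
        block_mat 0 0 0 (- 2 * R * s\<^sup>2 * (K\<^sup>2 - S\<^sup>2)) (2 * R * s\<^sup>2 * (K\<^sup>2 - S\<^sup>2))
      else if (k = 1 \<and> l = 2) \<or> (k = 2 \<and> l = 1) then
        block_mat 0 0 0 (- 4 * R * s * c * K * S) (4 * R * s * c * S * K)
      else 0)"

lemma round_met_pd_simps:
  "round_met_pd R s c S K 1 = block_mat 0 0 (2 * R * s * c) (2 * R * s * c * K\<^sup>2) (2 * R * s * c * S\<^sup>2)"
  "round_met_pd R s c S K 2 = block_mat 0 0 0 (- 2 * R * s\<^sup>2 * K * S) (2 * R * s\<^sup>2 * S * K)"
  "round_met_pd R s c S K 3 = 0" "round_met_pd R s c S K 4 = 0"
  by (simp_all add: round_met_pd_def)

lemma round_met_pd2_simps: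
  "round_met_pd2 R s c S K 1 1 =
     block_mat 0 0 (2 * R * (c\<^sup>2 - s\<^sup>2)) (2 * R * (c\<^sup>2 - s\<^sup>2) * K\<^sup>2) (2 * R * (c\<^sup>2 - s\<^sup>2) * S\<^sup>2)"
  "round_met_pd2 R s c S K 2 2 = block_mat 0 0 0 (- 2 * R * s\<^sup>2 * (K\<^sup>2 - S\<^sup>2)) (2 * R * s\<^sup>2 * (K\<^sup>2 - S\<^sup>2))"
  "round_met_pd2 R s c S K 1 2 = block_mat 0 0 0 (- 4 * R * s * c * K * S) (4 * R * s * c * S * K)"
  "round_met_pd2 R s c S K 2 1 = block_mat 0 0 0 (- 4 * R * s * c * K * S) (4 * R * s * c * S * K)"
  "round_met_pd2 R s c S K l 3 = 0" "round_met_pd2 R s c S K l 4 = 0"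
  "round_met_pd2 R s c S K 3 k = 0" "round_met_pd2 R s c S K 4 k = 0"
  by (simp_all add: round_met_pd2_def)

lemma ricci_expr_round_met:
  assumes "R \<noteq> 0" "s \<noteq> 0" "S \<noteq> 0" "K \<noteq> 0" "s\<^sup>2 + c\<^sup>2 = 1" "S\<^sup>2 + K\<^sup>2 = 1"
  shows "ricci_expr (block_inv (round_met R s S K)) (round_met_pd R s c S K)
    (round_met_pd2 R s c S K) i j = 3 / R * round_met R s S K $ i $ j"
proof -
  have inv: "block_inv (round_met R s S K) =
      block_mat (1 / R) 0 (1 / (R * s\<^sup>2)) (1 / (R * s\<^sup>2 * K\<^sup>2)) (1 / (R * s\<^sup>2 * S\<^sup>2))"
    using assms(1-4) by (simp add: round_met_def block_inv_block_mat_diag)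
  have "\<forall>i j. ricci_expr (block_inv (round_met R s S K)) (round_met_pd R s c S K)
      (round_met_pd2 R s c S K) i j = 3 / R * round_met R s S K $ i $ j"
    using assms(5,6) unfolding inv
    by (simp only: forall_4, intro conjI;
        simp only: round_met_def ricci_expr_def christoffel_deriv_expr_def christoffel_expr_def sum_4 matrix_matrix_mult_def vec_lambda_beta round_met_pd_simps
          round_met_pd2_simps block_mat_nth zero_index mult_zero_left mult_zero_right add_0_left
          add_0_right diff_zero minus_zero diff_0 mult_1_left mult_1_right;
        (simp add: field_simps assms(1-4))?; (algebra | simp add: eval_nat_numeral mult_ac))
  then show ?thesis by blast
qed

lemma ell_met_round:
  "ell_met R R R p q = round_met R (sin p) (sin q) (cos q)"
  "ell_met_pd R R R k p q = round_met_pd R (sin p) (cos p) (sin q) (cos q) k"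
  "ell_met_pd2 R R R l k p q = round_met_pd2 R (sin p) (cos p) (sin q) (cos q) l k"
  using exhaust_4[of k] exhaust_4[of l]
  by (auto simp: ell_met_def round_met_def ell_met_pd_def round_met_pd_def ell_met_pd2_def
      round_met_pd2_def ell_met_dr_def ell_met_dt_def ell_met_drr_def ell_met_drt_def ell_met_dtt_def
      block_mat_eq_iff cos_squared_eq algebra_simps)

lemma ricci_ell_metric_round:
  assumes "r > 0" "x \<in> ell_chart"
  shows "ricci (ell_metric r r r) i j x = 3 / r\<^sup>2 * ell_metric r r r x $ i $ j"
  using ricci_ell_metric_eq_ricci_expr[OF assms(1,1,1,2)] ell_metric_eq_ell_met[OF assms(1,1)]
    ricci_expr_round_met[of "r\<^sup>2" "sin (x$1)" "sin (x$2)" "cos (x$2)" "cos (x$1)"]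
    ell_chart_trig_pos[OF assms(2)] assms(1)
  by (simp add: ell_met_round sin_cos_squared_add)

section \<open>Einstein equations at \<rho> = \<pi>/2, \<theta> = \<pi>/4\<close>

lemma ell_met_mid: "ell_met R L T (pi/2) (pi/4) = block_mat R 0 ((L + T) / 2) (L / 2) (T / 2)"
  by (simp add: ell_met_def sin_45 cos_45 power_divide block_mat_eq_iff)

lemma ricci_expr_ell_met_mid:
  fixes R L T :: real
  assumes "R > 0" "L > 0" "T > 0"
  defines "Ric \<equiv> ricci_expr (block_inv (ell_met R L T (pi/2) (pi/4)))
      (\<lambda>k. ell_met_pd R L T k (pi/2) (pi/4)) (\<lambda>l k. ell_met_pd2 R L T l k (pi/2) (pi/4))"
  shows "Ric 1 1 = 2 + 4 * L * T / (L + T)\<^sup>2"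
    "Ric 3 3 = L * T / (R * (L + T)) + L / (L + T) + 2 * L * T / (L + T)\<^sup>2"
    "Ric 4 4 = L * T / (R * (L + T)) + T / (L + T) + 2 * L * T / (L + T)\<^sup>2"
proof -
  have half: "(sqrt 2 / 2) * (sqrt 2 / 2) = (1/2 :: real)" "(sqrt 2 / 2)\<^sup>2 = (1/2 :: real)"
    by (simp_all add: power2_eq_square)
  have inv: "block_inv (ell_met R L T (pi/2) (pi/4)) = block_mat (1/R) 0 (2/(L + T)) (2/L) (2/T)"
    unfolding ell_met_mid using assms(1-3) add_pos_pos[OF assms(2,3)]
    by (simp add: block_inv_block_mat_diag)
  have pd: "(\<lambda>k. ell_met_pd R L T k (pi/2) (pi/4)) =
      (\<lambda>k. if k = 1 then block_mat 0 (- (T - L) / 2) 0 0 0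
           else if k = 2 then block_mat 0 0 (L - T) (- L) T else 0)"
    by (auto simp: ell_met_pd_def ell_met_dr_def ell_met_dt_def sin_45 cos_45 half field_simps
        block_mat_eq_iff)
  have pd2: "(\<lambda>l k. ell_met_pd2 R L T l k (pi/2) (pi/4)) =
      (\<lambda>l k. if k = 1 \<and> l = 1
        then block_mat (- 2 * (R - (L + T) / 2)) 0 (- (L + T)) (- L) (- T) else 0)"
    by (intro ext) (auto simp: ell_met_pd2_def ell_met_drr_def ell_met_drt_def ell_met_dtt_def
        sin_45 cos_45 half field_simps block_mat_eq_iff)
  text \<open>Naming L + T lets field_simps clear that denominator.\<close>
  define U where "U = L + T"
  have nz: "R \<noteq> 0" "L \<noteq> 0" "T \<noteq> 0" "U \<noteq> 0"
    using assms by (auto simp: U_def)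
  note expand = Ric_def inv pd pd2 U_def[symmetric] ricci_expr_def christoffel_deriv_expr_def
    christoffel_expr_def sum_4 matrix_matrix_mult_def
  show "Ric 1 1 = 2 + 4 * L * T / (L + T)\<^sup>2"
    by (simp add: expand; simp add: field_simps nz power2_eq_square; simp add: U_def; algebra)
  show "Ric 3 3 = L * T / (R * (L + T)) + L / (L + T) + 2 * L * T / (L + T)\<^sup>2"
    by (simp add: expand; simp add: field_simps nz power2_eq_square; simp add: U_def; algebra)
  show "Ric 4 4 = L * T / (R * (L + T)) + T / (L + T) + 2 * L * T / (L + T)\<^sup>2"
    by (simp add: expand; simp add: field_simps nz power2_eq_square; simp add: U_def; algebra)
qed

lemma einstein_equations_mid_imp_eq:
  fixes R L T c :: real
  assumes pos: "R > 0" "L > 0" "T > 0"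
    and e1: "2 + 4 * L * T / (L + T)\<^sup>2 = c * R"
    and e3: "L * T / (R * (L + T)) + L / (L + T) + 2 * L * T / (L + T)\<^sup>2 = c * (L / 2)"
    and e4: "L * T / (R * (L + T)) + T / (L + T) + 2 * L * T / (L + T)\<^sup>2 = c * (T / 2)"
  shows "L = T \<and> R = L"
proof -
  have U: "L + T > 0" using pos by simp
  have "(L - T) / (L + T) = c * (L - T) / 2"
    using arg_cong2[where f = minus, OF e3 e4] by (simp add: diff_divide_distrib algebra_simps)
  then have "(L - T) * (c * (L + T) - 2) = 0"
    using U by (simp add: field_simps)
  moreover have "c * (L + T) \<noteq> 2"
  proof
    assume "c * (L + T) = 2"
    then have "c * (L / 2) = L / (L + T)"
      using U by (simp add: field_simps)
    then have "L * T / (R * (L + T)) + 2 * L * T / (L + T)\<^sup>2 = 0"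
      using e3 by linarith
    moreover have "L * T / (R * (L + T)) + 2 * L * T / (L + T)\<^sup>2 > 0"
      using pos U by (intro add_pos_pos) auto
    ultimately show False by simp
  qed
  ultimately have "L = T" by simp
  then have "c = 3 / R"
    using e1 pos by (simp add: field_simps power2_eq_square)
  then have "R = L"
    using e3 pos \<open>L = T\<close> unfolding \<open>c = 3 / R\<close> by (simp add: field_simps power2_eq_square)
  with \<open>L = T\<close> show ?thesis by simp
qed

lemma einstein_ell_metric_imp_round:
  assumes "r > 0" "l > 0" "lt > 0" and "einstein_on (ell_metric r l lt) ell_chart"
  shows "r = l \<and> l = lt"
proof -
  obtain c where
    c: "\<forall>x\<in>ell_chart. \<forall>i j. ricci (ell_metric r l lt) i j x = c * ell_metric r l lt x $ i $ j"
    using assms(4) unfolding einstein_on_def by blast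
  define x :: "real^4" where "x = vector [pi/2, pi/4, 0, 0]"
  have x: "x \<in> ell_chart" "x$1 = pi/2" "x$2 = pi/4"
    by (simp_all add: x_def ell_chart_def)
  have "ell_metric r l lt x $ 1 $ 1 = r\<^sup>2" "ell_metric r l lt x $ 3 $ 3 = l\<^sup>2 / 2"
      "ell_metric r l lt x $ 4 $ 4 = lt\<^sup>2 / 2"
    by (simp_all add: ell_metric_eq_ell_met assms x ell_met_mid)
  with c[rule_format, OF x(1)] ricci_ell_metric_eq_ricci_expr[OF assms(1-3) x(1)]
    ricci_expr_ell_met_mid[of "r\<^sup>2" "l\<^sup>2" "lt\<^sup>2"]
  have "l\<^sup>2 = lt\<^sup>2 \<and> r\<^sup>2 = l\<^sup>2"
    using assms by (intro einstein_equations_mid_imp_eq[where c = c]) (simp_all add: x)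
  then show ?thesis
    using assms by (simp add: power2_eq_iff_nonneg)
qed

theorem mainTheorem1:
  fixes r l lt :: real
  assumes "r > 0" and "l > 0" and "lt > 0"
  shows "einstein_on (ell_metric r l lt) ell_chart \<longleftrightarrow> (r = l \<and> l = lt)"
proof
  show "einstein_on (ell_metric r l lt) ell_chart \<Longrightarrow> r = l \<and> l = lt"
    using assms by (rule einstein_ell_metric_imp_round)
  show "r = l \<and> l = lt \<Longrightarrow> einstein_on (ell_metric r l lt) ell_chart"
    using ricci_ell_metric_round[OF assms(1)] unfolding einstein_on_def
    by (intro exI[of _ "3 / r\<^sup>2"]) auto
qed

end
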